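(* Let $\mathcal H$ be a 1-constituent CCRN of order two, and let $A$ be a MAS of $\mathcal H$ with exactly two reactions. Then there is no other MAS of $\mathcal H$ (with a different reaction set) having the same FWMC partition as $A$.
   Context: A chemical reaction network (CRN) consists of a finite species set $\mathcal S$ and a finite set $\mathcal R$ of reactions $r^-\to r^+$ with $r^-\ne r^+\in\mathbb Z_{\ge0}^{\mathcal S}$; input/output matrices $\mathbb S^-,\mathbb S^+$ have columns $r^-,r^+$, and $\mathbb S=\mathbb S^+-\mathbb S^-$. $(\mathbb A)_M^N$ denotes the submatrix with rows in $M$ and columns in $N$; $\mathbf v\gg\mathbf0$ means all entries $>0$, and $\mathbf v>\mathbf0$ means all entries $\ge0$ and $\mathbf v\ne\mathbf0$. A 1-constituent CCRN of order two is a CRN whose species are clusters $\bar 1,\bar2,\dots,\bar L$ (cluster $\bar n$ has size $n$), whose complexes are multisets of at most two clusters, and whose reactions conserve total size: for each reaction $r^-\to r^+$, $\sum_n n\,r^-_{\bar n}=\sum_n n\,r^+_{\bar n}$ (so $\mathbf x=(1,2,\dots,L)$ is a conservation law). A motif $(\mathcal M,\mathcal R')$ ($\mathcal M\subseteq\mathcal S,\mathcal R'\subseteq\mathcal R$) is exclusively autocatalytic if: (i) some $\mathbf v\gg\mathbf0$ in $\mathbb R^{\mathcal R'}$ has $(\mathbb S)_{\mathcal M}^{\mathcal R'}\mathbf v\gg\mathbf 0$; (ii) every row and (iii) every column of $(\mathbb S^-)_{\mathcal M}^{\mathcal R'}$ is semi-positive. An autocatalytic core is an exclusively autocatalytic motif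 $(A_C,\mathcal R_A)$ no proper sub-motif ($\mathcal M'\subseteq A_C$, $\mathcal R''\subseteq\mathcal R_A$) of which is exclusively autocatalytic. The minimal autocatalytic subnetwork (MAS) $A=(\mathcal S_A,\mathcal R_A)$ of a core $(A_C,\mathcal R_A)$ has reaction set $\mathcal R_A$ and species set $\mathcal S_A$ consisting of all species occurring in some input or output complex of a reaction in $\mathcal R_A$; each MAS is assumed to have a unique core. Put $\overline{\mathbb S}=(\mathbb S)_{\mathcal S_A}^{\mathcal R_A}$. FWMC partition of a MAS $A$: the quadruple (food set, waste set, non-core member set, core set), where the food set consists of the species of $\mathcal S_A$ whose row in $\overline{\mathbb S}$ has all entries $\le0$, the waste set those whose row has all entries $\ge0$, the member set those whose row has both a positive and a negative entry, the core set is $A_C$ (contained in the member set), and the non-core member set is the member set minus $A_C$. *)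

theory Defs
  imports Complex_Main "HOL-Library.Multiset"
begin

text \<open>Reactions are pairs (input complex, output complex) of multisets of species.
  In a 1-constituent CCRN the species are the clusters 1..L, identified with their size.\<close>

type_synonym reaction = "nat multiset \<times> nat multiset"

definition ccrn2 :: "nat \<Rightarrow> reaction set \<Rightarrow> bool" where
  "ccrn2 L R \<longleftrightarrow> finite R \<and>
     (\<forall>r\<in>R. fst r \<noteq> snd r
        \<and> size (fst r) \<le> 2 \<and> size (snd r) \<le> 2
        \<and> set_mset (fst r) \<subseteq> {1..L} \<and> set_mset (snd r) \<subseteq> {1..L}
        \<and> sum_mset (fst r) = sum_mset (snd r))"

definition sin :: "nat \<Rightarrow> reaction \<Rightarrow> nat" where
  "sin s r = count (fst r) s"

definition stoich :: "nat \<Rightarrow> reaction \<Rightarrow> int" where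
  "stoich s r = int (count (snd r) s) - int (count (fst r) s)"

text \<open>Exclusively autocatalytic motif (M, R') of the CRN with species {1..L} and reactions R.
  Motifs are taken nonempty (M \<noteq> {}; by (ii)/(iii) then also R' \<noteq> {}).\<close>
definition excl_autocatalytic :: "nat \<Rightarrow> reaction set \<Rightarrow> nat set \<Rightarrow> reaction set \<Rightarrow> bool" where
  "excl_autocatalytic L R M R' \<longleftrightarrow>
     M \<subseteq> {1..L} \<and> R' \<subseteq> R \<and> M \<noteq> {} \<and>
     (\<exists>v :: reaction \<Rightarrow> real. (\<forall>r\<in>R'. v r > 0) \<and>
        (\<forall>s\<in>M. (\<Sum>r\<in>R'. of_int (stoich s r) * v r) > 0)) \<and>
     (\<forall>s\<in>M. \<exists>r\<in>R'. sin s r > 0) \<and>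
     (\<forall>r\<in>R'. \<exists>s\<in>M. sin s r > 0)"

definition autocatalytic_core :: "nat \<Rightarrow> reaction set \<Rightarrow> nat set \<Rightarrow> reaction set \<Rightarrow> bool" where
  "autocatalytic_core L R AC RA \<longleftrightarrow>
     excl_autocatalytic L R AC RA \<and>
     (\<forall>M' R''. M' \<subseteq> AC \<longrightarrow> R'' \<subseteq> RA \<longrightarrow> (M', R'') \<noteq> (AC, RA)
        \<longrightarrow> \<not> excl_autocatalytic L R M' R'')"

text \<open>A MAS is determined by its reaction set RA (its species set is that of the reactions).\<close>
definition is_MAS :: "nat \<Rightarrow> reaction set \<Rightarrow> reaction set \<Rightarrow> bool" where
  "is_MAS L R RA \<longleftrightarrow> (\<exists>AC. autocatalytic_core L R AC RA)"

definition MAS_species :: "reaction set \<Rightarrow> nat set" where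
  "MAS_species RA = (\<Union>r\<in>RA. set_mset (fst r) \<union> set_mset (snd r))"

text \<open>The core of a MAS (unique by the standing assumption).\<close>
definition core_of :: "nat \<Rightarrow> reaction set \<Rightarrow> reaction set \<Rightarrow> nat set" where
  "core_of L R RA = (THE AC. autocatalytic_core L R AC RA)"

definition food_set :: "reaction set \<Rightarrow> nat set" where
  "food_set RA = {s \<in> MAS_species RA. \<forall>r\<in>RA. stoich s r \<le> 0}"

definition waste_set :: "reaction set \<Rightarrow> nat set" where
  "waste_set RA = {s \<in> MAS_species RA. \<forall>r\<in>RA. stoich s r \<ge> 0}"

definition member_set :: "reaction set \<Rightarrow> nat set" where
  "member_set RA = {s \<in> MAS_species RA. (\<exists>r\<in>RA. stoich s r > 0) \<and> (\<exists>r\<in>RA. stoich s r < 0)}"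

definition FWMC :: "nat \<Rightarrow> reaction set \<Rightarrow> reaction set \<Rightarrow> nat set \<times> nat set \<times> nat set \<times> nat set" where
  "FWMC L R RA = (food_set RA, waste_set RA, member_set RA - core_of L R RA, core_of L R RA)"

end

theory Submission
  imports Defs
begin

text \<open>In a CCRN of order two no cluster is both consumed and produced by one reaction.
  Hence a two-reaction core has two species a, b, and every core on {a, b} consists of
  exactly two reactions a + X \<rightarrow> b + Y and b + Z \<rightarrow> a + U with positive 2\<times>2 stoichiometric
  minor: any exclusively autocatalytic motif on {a, b} contains such a pair, which is
  autocatalytic on its own, and minimality of the core leaves nothing else. Size conservation
  and positivity of the minor fix Y and U in terms of X and Z; the food set is {X, Z}, the
  waste set is {Y, U} minus the core, and a short case analysis shows that food and waste
  together recover X and Z. So two MAS with equal FWMC partitions, whose cores agree, coincide.\<close>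

text \<open>Clusters have positive size, so size 0 encodes an absent cluster: a complex of at most
  two clusters that contains s is \<open>add_mset s (opt_cluster t)\<close>.\<close>

definition opt_cluster :: "nat \<Rightarrow> nat multiset" where
  "opt_cluster x = (if x = 0 then {#} else {#x#})"

lemma count_opt_cluster [simp]: "count (opt_cluster x) s = (if x \<noteq> 0 \<and> s = x then 1 else 0)"
  by (simp add: opt_cluster_def)

lemma sum_mset_opt_cluster [simp]: "sum_mset (opt_cluster x) = x"
  by (simp add: opt_cluster_def)

lemma complex_eq_add_mset_opt_cluster:
  assumes "s \<in># M" "size M \<le> 2" "0 \<notin># M"
  shows "M = add_mset s (opt_cluster (sum_mset M - s))"
proof -
  obtain N where M: "M = add_mset s N" using multi_member_split[OF assms(1)] ..
  have "N = opt_cluster (sum_mset N)"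
  proof (cases "N = {#}")
    case False
    with assms(2) M have "size N = 1" by (cases "size N") auto
    then obtain t where "N = {#t#}" using size_1_singleton_mset by blast
    with assms(3) M show ?thesis by (auto simp: opt_cluster_def)
  qed (simp add: opt_cluster_def)
  with M show ?thesis by simp
qed

lemma ccrn2_reactionD:
  assumes "ccrn2 L R" "r \<in> R"
  shows "fst r \<noteq> snd r" "size (fst r) \<le> 2" "size (snd r) \<le> 2" "0 \<notin># fst r" "0 \<notin># snd r"
    "sum_mset (fst r) = sum_mset (snd r)"
  using assms unfolding ccrn2_def by fastforce+

text \<open>If s occurred on both sides, size conservation would force the remaining clusters,
  and hence the two complexes, to agree.\<close>

lemma ccrn2_reactant_not_product:
  assumes "ccrn2 L R" "r \<in> R" "s \<in># fst r"
  shows "s \<notin># snd r"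
proof
  assume "s \<in># snd r"
  with assms show False
    using complex_eq_add_mset_opt_cluster ccrn2_reactionD[OF assms(1,2)] by metis
qed

lemma ccrn2_stoich_reactant:
  assumes "ccrn2 L R" "r \<in> R" "s \<in># fst r"
  shows "stoich s r < 0"
  using ccrn2_reactant_not_product[OF assms] assms(3) by (simp add: stoich_def not_in_iff)

lemma product_if_stoich_pos:
  assumes "0 < stoich s r"
  shows "s \<in># snd r"
proof -
  from assms have "count (fst r) s < count (snd r) s" by (simp add: stoich_def)
  then show ?thesis by (simp flip: count_greater_zero_iff)
qed

lemma ccrn2_producing_reaction:
  assumes "ccrn2 L R" "r \<in> R" "a \<in># fst r \<or> b \<in># fst r" "0 < stoich b r"
  shows "a \<in># fst r" "b \<in># snd r" "stoich a r < 0"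
proof -
  show "b \<in># snd r" using assms(4) by (rule product_if_stoich_pos)
  then have "b \<notin># fst r" using ccrn2_reactant_not_product[OF assms(1,2)] by blast
  with assms(3) show "a \<in># fst r" by blast
  then show "stoich a r < 0" by (rule ccrn2_stoich_reactant[OF assms(1,2)])
qed

lemma sin_pos_iff [simp]: "0 < sin s r \<longleftrightarrow> s \<in># fst r"
  by (simp add: sin_def)

lemma excl_autocatalytic_produces:
  assumes "excl_autocatalytic L R M R'" "s \<in> M"
  shows "\<exists>r\<in>R'. 0 < stoich s r"
proof (rule ccontr)
  assume none: "\<not> (\<exists>r\<in>R'. 0 < stoich s r)"
  obtain v :: "reaction \<Rightarrow> real" where "\<forall>r\<in>R'. 0 < v r"
    and "0 < (\<Sum>r\<in>R'. of_int (stoich s r) * v r)"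
    using assms unfolding excl_autocatalytic_def by blast
  moreover have "(\<Sum>r\<in>R'. of_int (stoich s r) * v r) \<le> 0"
    using none \<open>\<forall>r\<in>R'. 0 < v r\<close>
    by (intro sum_nonpos) (auto intro!: mult_nonpos_nonneg simp: not_less less_imp_le)
  ultimately show False by linarith
qed

lemma excl_autocatalytic_species_subset:
  assumes "excl_autocatalytic L R M R'" "M' \<subseteq> M" "M' \<noteq> {}" "\<forall>r\<in>R'. \<exists>s\<in>M'. s \<in># fst r"
  shows "excl_autocatalytic L R M' R'"
proof -
  obtain v :: "reaction \<Rightarrow> real" where "\<forall>r\<in>R'. 0 < v r"
    and "\<forall>s\<in>M. 0 < (\<Sum>r\<in>R'. of_int (stoich s r) * v r)"
    using assms(1) unfolding excl_autocatalytic_def by blast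
  with assms(2) have "\<exists>v :: reaction \<Rightarrow> real. (\<forall>r\<in>R'. 0 < v r) \<and>
      (\<forall>s\<in>M'. 0 < (\<Sum>r\<in>R'. of_int (stoich s r) * v r))"
    by blast
  moreover have "M' \<subseteq> {1..L}" "R' \<subseteq> R" "\<forall>s\<in>M'. \<exists>r\<in>R'. s \<in># fst r"
    using assms(1,2) unfolding excl_autocatalytic_def by auto
  ultimately show ?thesis
    using assms(3,4) unfolding excl_autocatalytic_def sin_pos_iff by blast
qed

lemma autocatalytic_core_minimal:
  assumes "autocatalytic_core L R AC RA" "M \<subseteq> AC" "R' \<subseteq> RA" "excl_autocatalytic L R M R'"
  shows "M = AC" "R' = RA"
  using assms unfolding autocatalytic_core_def by blast+

lemma autocatalytic_core_core_of:
  assumes "\<exists>!AC. autocatalytic_core L R AC RX"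
  shows "autocatalytic_core L R (core_of L R RX) RX"
  using assms unfolding core_of_def by (rule theI')

lemma autocatalytic_core_two_reactions:
  assumes "ccrn2 L R" "autocatalytic_core L R AC RA" "card RA = 2"
  shows "\<exists>a b. a \<noteq> b \<and> AC = {a,b}"
proof -
  have ex: "excl_autocatalytic L R AC RA"
    using assms(2) unfolding autocatalytic_core_def by blast
  then have "RA \<subseteq> R" "AC \<noteq> {}" and rows: "\<forall>s\<in>AC. \<exists>r\<in>RA. s \<in># fst r"
    and cols: "\<forall>r\<in>RA. \<exists>s\<in>AC. s \<in># fst r"
    unfolding excl_autocatalytic_def by auto
  obtain s where s: "s \<in> AC" using \<open>AC \<noteq> {}\<close> by blast
  obtain r where r: "r \<in> RA" "s \<in># snd r"
    using excl_autocatalytic_produces[OF ex s] product_if_stoich_pos by blast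
  obtain t where t: "t \<in> AC" "t \<in># fst r" using cols r(1) by blast
  obtain q where q: "q \<in> RA" "s \<in># fst q" using rows s by blast
  have "t \<noteq> s" "q \<noteq> r"
    using ccrn2_reactant_not_product[OF assms(1)] \<open>RA \<subseteq> R\<close> r t q by blast+
  with assms(3) r(1) q(1) have "RA = {r,q}" by (auto simp: card_2_iff)
  with q t have "\<forall>p\<in>RA. \<exists>s'\<in>{s,t}. s' \<in># fst p" by blast
  then have "excl_autocatalytic L R {s,t} RA"
    using excl_autocatalytic_species_subset[OF ex] s t by simp
  moreover have "{s,t} \<subseteq> AC" using s t by simp
  ultimately have "AC = {s,t}"
    using autocatalytic_core_minimal(1)[OF assms(2) _ order_refl] by metis
  with \<open>t \<noteq> s\<close> show ?thesis by blast
qed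

lemma sum_le_sum_subset_nonpos:
  fixes f :: "'a \<Rightarrow> 'b::ordered_comm_monoid_add"
  assumes "finite S" "T \<subseteq> S" "\<And>r. r \<in> S - T \<Longrightarrow> f r \<le> 0"
  shows "sum f S \<le> sum f T"
proof -
  have "sum f S = sum f T + sum f (S - T)"
    using assms(1,2) by (metis add.commute sum.subset_diff)
  moreover have "sum f (S - T) \<le> 0" using assms(3) by (rule sum_nonpos)
  ultimately show ?thesis by (metis add.right_neutral add_left_mono)
qed

text \<open>Applied to the flux-weighted rows of two core species: a productive flux forces a
  reaction producing each of them whose 2\<times>2 minor is positive.\<close>

lemma exists_positive_minor:
  fixes f g :: "'a \<Rightarrow> real"
  assumes fin: "finite S" and pos: "0 < sum f S" "0 < sum g S"
    and signs: "\<And>r. r \<in> S \<Longrightarrow> 0 < g r \<Longrightarrow> f r \<le> 0" "\<And>r. r \<in> S \<Longrightarrow> 0 < f r \<Longrightarrow> g r \<le> 0"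
  shows "\<exists>\<rho>\<in>S. \<exists>\<sigma>\<in>S. 0 < g \<rho> \<and> 0 < f \<sigma> \<and> f \<rho> * g \<sigma> < g \<rho> * f \<sigma>"
proof (rule ccontr)
  assume none: "\<not> ?thesis"
  define A where "A = {r\<in>S. 0 < g r}"
  define B where "B = {r\<in>S. 0 < f r}"
  have "finite A" "finite B" using fin by (simp_all add: A_def B_def)
  moreover have "A \<inter> B = {}" using signs(1) by (force simp: A_def B_def)
  moreover have "sum f S \<le> sum f (A \<union> B)" "sum g S \<le> sum g (A \<union> B)"
    by (rule sum_le_sum_subset_nonpos[OF fin]; force simp: A_def B_def)+
  ultimately have fAB: "0 < sum f A + sum f B" and gAB: "0 < sum g A + sum g B"
    using pos by (simp_all add: sum.union_disjoint)
  have fA: "sum f A \<le> 0" and gB: "sum g B \<le> 0"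
    using signs by (auto intro!: sum_nonpos simp: A_def B_def)
  have "sum f A * sum g B = (- sum f A) * (- sum g B)" by simp
  also have "\<dots> \<le> (- sum f A) * sum g A"
    using fA gAB by (intro mult_left_mono) linarith+
  also have "\<dots> < sum f B * sum g A"
    using fA fAB gB gAB by (intro mult_strict_right_mono) linarith+
  finally have "sum f A * sum g B < sum g A * sum f B" by (simp add: mult.commute)
  moreover have "sum g A * sum f B \<le> sum f A * sum g B"
  proof -
    have "g \<rho> * f \<sigma> \<le> f \<rho> * g \<sigma>" if "\<rho> \<in> A" "\<sigma> \<in> B" for \<rho> \<sigma>
      using none that unfolding A_def B_def by (blast intro: leI)
    then have "(\<Sum>\<rho>\<in>A. \<Sum>\<sigma>\<in>B. g \<rho> * f \<sigma>) \<le> (\<Sum>\<rho>\<in>A. \<Sum>\<sigma>\<in>B. f \<rho> * g \<sigma>)"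
      by (intro sum_mono) auto
    then show ?thesis by (simp add: sum_product)
  qed
  ultimately show False by linarith
qed

lemma excl_autocatalytic_exchange_pair:
  assumes "{a,b} \<subseteq> {1..L}" "\<rho> \<in> R" "\<sigma> \<in> R" "a \<in># fst \<rho>" "b \<in># fst \<sigma>"
    and "stoich a \<rho> < stoich b \<rho>" "stoich b \<sigma> < stoich a \<sigma>"
    and minor: "stoich a \<rho> * stoich b \<sigma> < stoich b \<rho> * stoich a \<sigma>"
  shows "excl_autocatalytic L R {a,b} {\<rho>,\<sigma>}"
proof -
  have "\<rho> \<noteq> \<sigma>" using minor by (auto simp: mult.commute)
  \<comment> \<open>Under this flux both species are produced at a rate equal to the minor.\<close>
  define v :: "reaction \<Rightarrow> real" where
    "v r = (if r = \<rho> then of_int (stoich a \<sigma> - stoich b \<sigma>) else of_int (stoich b \<rho> - stoich a \<rho>))" for r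
  have "\<forall>r\<in>{\<rho>,\<sigma>}. 0 < v r" using assms(6,7) \<open>\<rho> \<noteq> \<sigma>\<close> by (simp add: v_def)
  moreover have "(\<Sum>r\<in>{\<rho>,\<sigma>}. of_int (stoich s r) * v r)
      = of_int (stoich b \<rho>) * of_int (stoich a \<sigma>) - of_int (stoich a \<rho>) * of_int (stoich b \<sigma>)"
    if "s \<in> {a,b}" for s
    using that \<open>\<rho> \<noteq> \<sigma>\<close> by (auto simp: v_def algebra_simps)
  moreover have "real_of_int (stoich a \<rho>) * of_int (stoich b \<sigma>) < of_int (stoich b \<rho>) * of_int (stoich a \<sigma>)"
    using minor by (metis of_int_less_iff of_int_mult)
  ultimately have "\<exists>v :: reaction \<Rightarrow> real. (\<forall>r\<in>{\<rho>,\<sigma>}. 0 < v r) \<and>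
      (\<forall>s\<in>{a,b}. 0 < (\<Sum>r\<in>{\<rho>,\<sigma>}. of_int (stoich s r) * v r))"
    by (intro exI[of _ v]) simp
  then show ?thesis using assms(1-5) unfolding excl_autocatalytic_def sin_pos_iff by blast
qed

lemma ccrn2_excl_autocatalytic_positive_minor:
  assumes cc: "ccrn2 L R" and ex: "excl_autocatalytic L R {a,b} RX"
  shows "\<exists>\<rho>\<in>RX. \<exists>\<sigma>\<in>RX. 0 < stoich b \<rho> \<and> 0 < stoich a \<sigma>
    \<and> stoich a \<rho> * stoich b \<sigma> < stoich b \<rho> * stoich a \<sigma>"
proof -
  obtain v :: "reaction \<Rightarrow> real" where v: "\<forall>r\<in>RX. 0 < v r"
    and sums: "\<forall>s\<in>{a,b}. 0 < (\<Sum>r\<in>RX. of_int (stoich s r) * v r)"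
    using ex unfolding excl_autocatalytic_def by blast
  from ex have sub: "RX \<subseteq> R" and consumes: "\<forall>r\<in>RX. a \<in># fst r \<or> b \<in># fst r"
    unfolding excl_autocatalytic_def by auto
  have fin: "finite RX" using cc sub finite_subset unfolding ccrn2_def by blast
  define f where "f r = of_int (stoich a r) * v r" for r
  define g where "g r = of_int (stoich b r) * v r" for r
  have "\<exists>\<rho>\<in>RX. \<exists>\<sigma>\<in>RX. 0 < g \<rho> \<and> 0 < f \<sigma> \<and> f \<rho> * g \<sigma> < g \<rho> * f \<sigma>"
  proof (rule exists_positive_minor[OF fin])
    show "0 < sum f RX" "0 < sum g RX" using sums by (simp_all add: f_def g_def)
    show "f r \<le> 0" if "r \<in> RX" "0 < g r" for r
    proof -
      have "0 < v r" using v that(1) by blast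
      with that(2) have "0 < stoich b r" by (simp add: g_def zero_less_mult_iff)
      then have "stoich a r < 0"
        using ccrn2_producing_reaction(3)[OF cc, of r a b] that(1) sub consumes by blast
      with \<open>0 < v r\<close> show ?thesis by (simp add: f_def mult_nonpos_nonneg)
    qed
    show "g r \<le> 0" if "r \<in> RX" "0 < f r" for r
    proof -
      have "0 < v r" using v that(1) by blast
      with that(2) have "0 < stoich a r" by (simp add: f_def zero_less_mult_iff)
      then have "stoich b r < 0"
        using ccrn2_producing_reaction(3)[OF cc, of r b a] that(1) sub consumes by blast
      with \<open>0 < v r\<close> show ?thesis by (simp add: g_def mult_nonpos_nonneg)
    qed
  qed
  then obtain \<rho> \<sigma> where \<rho>\<sigma>: "\<rho> \<in> RX" "\<sigma> \<in> RX" "0 < stoich b \<rho>" "0 < stoich a \<sigma>"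
    and scaled: "of_int (stoich a \<rho> * stoich b \<sigma>) * (v \<rho> * v \<sigma>)
      < of_int (stoich b \<rho> * stoich a \<sigma>) * (v \<rho> * v \<sigma>)"
    using v by (auto simp: f_def g_def zero_less_mult_iff algebra_simps)
  have "0 < v \<rho> * v \<sigma>" using v \<rho>\<sigma>(1,2) by simp
  with scaled have "stoich a \<rho> * stoich b \<sigma> < stoich b \<rho> * stoich a \<sigma>"
    by (simp only: mult_less_cancel_right_pos of_int_less_iff)
  with \<rho>\<sigma> show ?thesis by blast
qed

lemma autocatalytic_core_pair_reactions:
  assumes cc: "ccrn2 L R" and core: "autocatalytic_core L R {a,b} RX"
  shows "\<exists>\<rho> \<sigma>. RX = {\<rho>,\<sigma>} \<and> a \<in># fst \<rho> \<and> b \<in># snd \<rho> \<and> b \<in># fst \<sigma> \<and> a \<in># snd \<sigma>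
    \<and> stoich a \<rho> * stoich b \<sigma> < stoich b \<rho> * stoich a \<sigma>"
proof -
  have ex: "excl_autocatalytic L R {a,b} RX"
    using core unfolding autocatalytic_core_def by blast
  then have sub: "{a,b} \<subseteq> {1..L}" "RX \<subseteq> R"
    and consumes: "\<forall>r\<in>RX. a \<in># fst r \<or> b \<in># fst r"
    unfolding excl_autocatalytic_def by auto
  obtain \<rho> \<sigma> where \<rho>\<sigma>: "\<rho> \<in> RX" "\<sigma> \<in> RX" "0 < stoich b \<rho>" "0 < stoich a \<sigma>"
    and minor: "stoich a \<rho> * stoich b \<sigma> < stoich b \<rho> * stoich a \<sigma>"
    using ccrn2_excl_autocatalytic_positive_minor[OF cc ex] by blast
  have "\<rho> \<in> R" "\<sigma> \<in> R" using \<rho>\<sigma>(1,2) sub(2) by auto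
  have \<rho>: "a \<in># fst \<rho>" "b \<in># snd \<rho>" "stoich a \<rho> < 0"
    using ccrn2_producing_reaction[OF cc \<open>\<rho> \<in> R\<close> _ \<rho>\<sigma>(3)] consumes \<rho>\<sigma>(1) by blast+
  have \<sigma>: "b \<in># fst \<sigma>" "a \<in># snd \<sigma>" "stoich b \<sigma> < 0"
    using ccrn2_producing_reaction[OF cc \<open>\<sigma> \<in> R\<close> _ \<rho>\<sigma>(4)] consumes \<rho>\<sigma>(2) by blast+
  have "excl_autocatalytic L R {a,b} {\<rho>,\<sigma>}"
  proof (rule excl_autocatalytic_exchange_pair[OF sub(1) \<open>\<rho> \<in> R\<close> \<open>\<sigma> \<in> R\<close> \<rho>(1) \<sigma>(1) _ _ minor])
    show "stoich a \<rho> < stoich b \<rho>" "stoich b \<sigma> < stoich a \<sigma>"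
      using \<rho>(3) \<sigma>(3) \<rho>\<sigma>(3,4) by linarith+
  qed
  moreover have "{\<rho>,\<sigma>} \<subseteq> RX" using \<rho>\<sigma>(1,2) by simp
  ultimately have "RX = {\<rho>,\<sigma>}"
    by (metis autocatalytic_core_minimal(2)[OF core order_refl])
  with \<rho> \<sigma> minor show ?thesis by blast
qed

definition exchange_reaction :: "nat \<Rightarrow> nat \<Rightarrow> nat \<Rightarrow> nat \<Rightarrow> reaction" where
  "exchange_reaction a x b y = (add_mset a (opt_cluster x), add_mset b (opt_cluster y))"

text \<open>Conditions on a core pair a + x \<rightarrow> b + y, b + z \<rightarrow> a + u: size conservation, positivity
  of the 2\<times>2 minor (y = b or u = a, x \<noteq> a, z \<noteq> b), and no core species on both sides.\<close>

definition exchange_params :: "nat \<Rightarrow> nat \<Rightarrow> nat \<Rightarrow> nat \<Rightarrow> nat \<Rightarrow> nat \<Rightarrow> bool" where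
  "exchange_params a b x y z u \<longleftrightarrow> a + x = b + y \<and> b + z = a + u \<and> (y = b \<or> u = a)
     \<and> x \<notin> {a,b} \<and> z \<notin> {a,b}"

lemma stoich_exchange_reaction:
  "stoich s (exchange_reaction a x b y)
     = of_bool (s = b) + of_bool (y \<noteq> 0 \<and> s = y) - of_bool (s = a) - of_bool (x \<noteq> 0 \<and> s = x)"
  by (simp add: stoich_def exchange_reaction_def)

lemma ccrn2_reaction_exchange_form:
  assumes cc: "ccrn2 L R" and r: "r \<in> R" and ab: "a \<in># fst r" "b \<in># snd r"
  shows "\<exists>x y. r = exchange_reaction a x b y \<and> a + x = b + y \<and> x \<noteq> b \<and> y \<noteq> a"
proof -
  define x y where "x = sum_mset (fst r) - a" and "y = sum_mset (snd r) - b"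
  have fst: "fst r = add_mset a (opt_cluster x)"
    unfolding x_def using ab(1) ccrn2_reactionD(2,4)[OF cc r] by (rule complex_eq_add_mset_opt_cluster)
  have snd: "snd r = add_mset b (opt_cluster y)"
    unfolding y_def using ab(2) ccrn2_reactionD(3,5)[OF cc r] by (rule complex_eq_add_mset_opt_cluster)
  have "a + x = b + y" using ccrn2_reactionD(6)[OF cc r] by (simp add: fst snd)
  moreover have "b \<notin># fst r" "a \<notin># snd r"
    using ccrn2_reactant_not_product[OF cc r] ab by blast+
  then have "x \<noteq> b" "y \<noteq> a"
    using ab ccrn2_reactionD(4,5)[OF cc r] by (auto simp: fst snd opt_cluster_def)
  ultimately show ?thesis by (metis exchange_reaction_def prod.collapse fst snd)
qed

lemma autocatalytic_core_exchange_params: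
  assumes cc: "ccrn2 L R" and core: "autocatalytic_core L R {a,b} RX" and "a \<noteq> b"
  shows "\<exists>x y z u. RX = {exchange_reaction a x b y, exchange_reaction b z a u}
    \<and> exchange_params a b x y z u"
proof -
  obtain \<rho> \<sigma> where RX: "RX = {\<rho>,\<sigma>}" and \<rho>: "a \<in># fst \<rho>" "b \<in># snd \<rho>"
    and \<sigma>: "b \<in># fst \<sigma>" "a \<in># snd \<sigma>"
    and minor: "stoich a \<rho> * stoich b \<sigma> < stoich b \<rho> * stoich a \<sigma>"
    using autocatalytic_core_pair_reactions[OF cc core] by blast
  have "\<rho> \<in> R" "\<sigma> \<in> R"
    using core RX unfolding autocatalytic_core_def excl_autocatalytic_def by auto
  then have "a \<noteq> 0" "b \<noteq> 0" using \<rho>(1) \<sigma>(1) ccrn2_reactionD(4)[OF cc] by metis+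
  obtain x y where x: "\<rho> = exchange_reaction a x b y" "a + x = b + y" "x \<noteq> b" "y \<noteq> a"
    using ccrn2_reaction_exchange_form[OF cc \<open>\<rho> \<in> R\<close> \<rho>] by blast
  obtain z u where z: "\<sigma> = exchange_reaction b z a u" "b + z = a + u" "z \<noteq> a" "u \<noteq> b"
    using ccrn2_reaction_exchange_form[OF cc \<open>\<sigma> \<in> R\<close> \<sigma>] by blast
  have "stoich a \<rho> = - 1 - of_bool (x = a)" "stoich b \<rho> = 1 + of_bool (y = b)"
    "stoich b \<sigma> = - 1 - of_bool (z = b)" "stoich a \<sigma> = 1 + of_bool (u = a)"
    using x z \<open>a \<noteq> b\<close> \<open>a \<noteq> 0\<close> \<open>b \<noteq> 0\<close> by (auto simp: stoich_exchange_reaction)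
  with minor x(2) z(2) \<open>a \<noteq> b\<close> have "(y = b \<or> u = a) \<and> x \<noteq> a \<and> z \<noteq> b"
    by (cases "x = a"; cases "z = b"; cases "y = b"; cases "u = a") simp_all
  with x z RX show ?thesis unfolding exchange_params_def by blast
qed

lemma MAS_species_exchange_pair:
  "MAS_species {exchange_reaction a x b y, exchange_reaction b z a u} = {a,b} \<union> ({x,y,z,u} - {0})"
  by (auto simp: MAS_species_def exchange_reaction_def opt_cluster_def split: if_splits)

lemma exchange_pair_food_waste:
  assumes "a \<noteq> 0" "b \<noteq> 0" "a \<noteq> b" and params: "exchange_params a b x y z u"
  defines "RX \<equiv> {exchange_reaction a x b y, exchange_reaction b z a u}"
  shows "food_set RX = {x,z} - {0}" "waste_set RX = {y,u} - {0,a,b}"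
proof -
  define r1 r2 where "r1 = exchange_reaction a x b y" and "r2 = exchange_reaction b z a u"
  have RX: "RX = {r1,r2}" by (simp add: RX_def r1_def r2_def)
  have "x \<notin> {a,b}" "z \<notin> {a,b}" "y \<noteq> a" "u \<noteq> b"
    "x \<noteq> 0 \<Longrightarrow> x \<notin> {y,u}" "z \<noteq> 0 \<Longrightarrow> z \<notin> {y,u}"
    using assms(3) params unfolding exchange_params_def by auto
  note distinct = this assms(1-3)
  have core_signs: "stoich a r1 < 0" "0 < stoich a r2" "0 < stoich b r1" "stoich b r2 < 0"
    using distinct by (auto simp: stoich_exchange_reaction r1_def r2_def)
  have "stoich x r1 = -1" "stoich x r2 \<le> 0" if "x \<noteq> 0"
    using that distinct by (simp_all add: stoich_exchange_reaction r1_def r2_def)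
  moreover have "stoich z r2 = -1" "stoich z r1 \<le> 0" if "z \<noteq> 0"
    using that distinct by (simp_all add: stoich_exchange_reaction r1_def r2_def)
  ultimately have food_signs: "stoich s r1 \<le> 0" "stoich s r2 \<le> 0" "stoich s r1 < 0 \<or> stoich s r2 < 0"
    if "s \<in> {x,z} - {0}" for s
    using that by auto
  have waste_signs: "0 \<le> stoich s r1" "0 \<le> stoich s r2" "0 < stoich s r1 \<or> 0 < stoich s r2"
    if "s \<in> {y,u} - {0,a,b}" for s
    using that distinct by (auto simp: stoich_exchange_reaction r1_def r2_def)
  have species: "MAS_species RX = {a,b} \<union> ({x,z} - {0}) \<union> ({y,u} - {0,a,b})"
    unfolding RX_def MAS_species_exchange_pair by auto
  show "food_set RX = {x,z} - {0}"
  proof (intro set_eqI iffI)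
    fix s assume "s \<in> food_set RX"
    then have s: "s \<in> MAS_species RX" "stoich s r1 \<le> 0" "stoich s r2 \<le> 0"
      by (auto simp: food_set_def RX)
    then have "s \<notin> {a,b}" "s \<notin> {y,u} - {0,a,b}"
      using core_signs waste_signs(3)[of s] by auto
    with s(1) show "s \<in> {x,z} - {0}" unfolding species by blast
  next
    fix s assume "s \<in> {x,z} - {0}"
    then show "s \<in> food_set RX" using food_signs unfolding food_set_def species by (simp add: RX)
  qed
  show "waste_set RX = {y,u} - {0,a,b}"
  proof (intro set_eqI iffI)
    fix s assume "s \<in> waste_set RX"
    then have s: "s \<in> MAS_species RX" "0 \<le> stoich s r1" "0 \<le> stoich s r2"
      by (auto simp: waste_set_def RX)
    then have "s \<notin> {a,b}" "s \<notin> {x,z} - {0}"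
      using core_signs food_signs(3)[of s] by auto
    with s(1) show "s \<in> {y,u} - {0,a,b}" unfolding species by blast
  next
    fix s assume "s \<in> {y,u} - {0,a,b}"
    then show "s \<in> waste_set RX" using waste_signs unfolding waste_set_def species by (simp add: RX)
  qed
qed

lemma exchange_params_swap:
  "exchange_params a b x y z u \<longleftrightarrow> exchange_params b a z u x y"
  unfolding exchange_params_def by auto

lemma exchange_params_no_transposition:
  assumes "exchange_params a b x y z u" "exchange_params a b z y' x u'" "a \<noteq> b"
  shows "x = z"
  using assms unfolding exchange_params_def by auto

text \<open>Pairs with z = 0 and with z = x have the same food set; the waste set tells them apart.\<close>

lemma exchange_params_waste_separates:
  assumes "a < b" "exchange_params a b x y 0 u" "exchange_params a b x y' x u'"
  shows "u' \<notin> {0, a, b, y, u}"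
  using assms unfolding exchange_params_def by auto

lemma exchange_params_determined_lt:
  assumes ab: "a < b"
    and p: "exchange_params a b x y z u" and p': "exchange_params a b x' y' z' u'"
    and food: "{x,z} - {0} = {x',z'} - {0}"
    and waste: "{y,u} - {0,a,b} = {y',u'} - {0,a,b}"
  shows "x = x' \<and> z = z'"
proof -
  have "x \<noteq> 0" "x' \<noteq> 0" using ab p p' unfolding exchange_params_def by auto
  then have "x \<in> {x',z'}" "x' \<in> {x,z}" using food by blast+
  moreover have "x = z" if "x' = z" "z' = x"
    using exchange_params_no_transposition[OF p] p' ab that by simp
  ultimately have x: "x = x'" by blast
  with p p' have y: "y = y'" unfolding exchange_params_def by simp
  have "z = z'"
  proof (rule ccontr)
    assume "z \<noteq> z'"
    moreover have "z \<in> {0,x,z'}" "z' \<in> {0,x,z}" using food x by blast+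
    ultimately consider "z = 0" "z' = x" | "z = x" "z' = 0" by blast
    then show False
    proof cases
      case 1
      then have "u' \<notin> {0,a,b,y,u}"
        using exchange_params_waste_separates[OF ab, of x y u y' u'] p p' x by simp
      then show False using waste by blast
    next
      case 2
      then have "u \<notin> {0,a,b,y',u'}"
        using exchange_params_waste_separates[OF ab, of x y' u' y u] p p' x by simp
      then show False using waste by blast
    qed
  qed
  with x show ?thesis ..
qed

lemma exchange_params_determined:
  assumes ab: "a \<noteq> b"
    and p: "exchange_params a b x y z u" and p': "exchange_params a b x' y' z' u'"
    and food: "{x,z} - {0} = {x',z'} - {0}"
    and waste: "{y,u} - {0,a,b} = {y',u'} - {0,a,b}"
  shows "x = x' \<and> y = y' \<and> z = z' \<and> u = u'"
proof -
  have "x = x' \<and> z = z'"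
  proof (cases "a < b")
    case True
    then show ?thesis using exchange_params_determined_lt p p' food waste by blast
  next
    case False
    with ab have "b < a" by simp
    moreover have "exchange_params b a z u x y" "exchange_params b a z' u' x' y'"
      using p p' exchange_params_swap by blast+
    moreover have "{z,x} - {0} = {z',x'} - {0}" "{u,y} - {0,b,a} = {u',y'} - {0,b,a}"
      using food waste by (simp_all add: insert_commute)
    ultimately show ?thesis by (blast dest: exchange_params_determined_lt)
  qed
  with p p' show ?thesis unfolding exchange_params_def by simp
qed

theorem mainTheorem12:
  fixes L :: nat and R :: "reaction set" and RA RB :: "reaction set"
  assumes "ccrn2 L R"
    and unique_core: "\<forall>RX. is_MAS L R RX \<longrightarrow> (\<exists>!AC. autocatalytic_core L R AC RX)"
    and "is_MAS L R RA" and "card RA = 2"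
    and "is_MAS L R RB" and "RB \<noteq> RA"
  shows "FWMC L R RB \<noteq> FWMC L R RA"
proof
  assume eq: "FWMC L R RB = FWMC L R RA"
  have coreA: "autocatalytic_core L R (core_of L R RA) RA"
    and coreB: "autocatalytic_core L R (core_of L R RB) RB"
    using unique_core assms(3,5) by (simp_all add: autocatalytic_core_core_of)
  obtain a b where "a \<noteq> b" and AC: "core_of L R RA = {a,b}"
    using autocatalytic_core_two_reactions[OF assms(1) coreA assms(4)] by blast
  have "a \<noteq> 0" "b \<noteq> 0"
    using coreA unfolding AC autocatalytic_core_def excl_autocatalytic_def by auto
  from eq have food: "food_set RB = food_set RA" and waste: "waste_set RB = waste_set RA"
    and BC: "core_of L R RB = {a,b}"
    unfolding FWMC_def AC by simp_all
  obtain x y z u where RA: "RA = {exchange_reaction a x b y, exchange_reaction b z a u}"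
    and pA: "exchange_params a b x y z u"
    using autocatalytic_core_exchange_params[OF assms(1) coreA[unfolded AC] \<open>a \<noteq> b\<close>] by blast
  obtain x' y' z' u' where RB: "RB = {exchange_reaction a x' b y', exchange_reaction b z' a u'}"
    and pB: "exchange_params a b x' y' z' u'"
    using autocatalytic_core_exchange_params[OF assms(1) coreB[unfolded BC] \<open>a \<noteq> b\<close>] by blast
  have "x' = x \<and> y' = y \<and> z' = z \<and> u' = u"
    using exchange_params_determined[OF \<open>a \<noteq> b\<close> pB pA] food waste
      exchange_pair_food_waste[OF \<open>a \<noteq> 0\<close> \<open>b \<noteq> 0\<close> \<open>a \<noteq> b\<close>] pA pB
    unfolding RA RB by simp
  then have "RB = RA" by (simp add: RA RB)
  with \<open>RB \<noteq> RA\<close> show False ..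
qed

end
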